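(* Let $\kappa$ be a regular cardinal and $\lambda\le\kappa$. If $(T,L)$ is a good labelled $(\kappa,\lambda)$-tree, then $(T,L)$ is a $(\kappa,\lambda)$-Borel$^*$-code.
   Context: Basic $\kappa$-open sets: $N_\eta=\{\zeta\in\kappa^\kappa\mid\eta\subseteq\zeta\}$ for $\eta:X\to\kappa$, $X\subseteq\kappa$, $|X|<\kappa$, and $\emptyset$; in $\kappa^\kappa\times\kappa^\kappa$ they are products $N_\eta\times N_\xi$. A set is $\kappa$-open if it is a union of at most $\kappa$ basic $\kappa$-open sets, $\kappa$-closed if its complement is $\kappa$-open; $\kappa$-Borel sets form the smallest class containing the basic $\kappa$-open sets closed under complements and unions and intersections of at most $\kappa$ sets. A good labelled $(\kappa,\lambda)$-tree is a pair $(T,L)$ where $T$ is a (rooted) tree without branches of length $\kappa$, every element of $T$ has at most $\kappa$ immediate successors, $|T|\le\lambda$, every increasing sequence in $T$ has a supremum in $T$, $L(t)\in\{\bigcup,\bigcap\}$ for every non-leaf $t$, and $L(t)$ is a basic $\kappa$-open set for every leaf $t$. Borel$^*$-game $GB(\xi,(T,L))$ for $\xi\in\kappa^\kappa$: the play starts at the root; at a non-leaf node $t$, player II chooses an immediate successor if $L(t)=\bigcup$ and player I chooses one if $L(t)=\bigcap$; at limit stages the play moves to the supremum of the nodes chosen so far; the play ends at a leaf $t$ and II wins iff $\xi\in L(t)$. $(T,L)$ is a $(\kappa,\lambda)$-Borel$^*$-code if it is a good labelled $(\kappa,\lambda)$-tree and there is a function $\pi$ such that: (i) $\mathrm{dom}(\pi)$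 is a $\kappa$-closed subset of $\kappa^\kappa$ and each $\pi(\eta)$ is a strategy of II in the Borel$^*$-game on $(T,L)$; (ii) for every $\xi\in\kappa^\kappa$, if II has a winning strategy in $GB(\xi,(T,L))$ then $\pi(\eta)$ is a winning strategy of II in $GB(\xi,(T,L))$ for some $\eta\in\mathrm{dom}(\pi)$; (iii) the set $\{(\xi,\eta)\mid\eta\in\mathrm{dom}(\pi)$ and $\pi(\eta)$ is a winning strategy of II in $GB(\xi,(T,L))\}$ is $\kappa$-Borel. *)

theory Defs
  imports Main
begin

text \<open>The cardinal kappa is represented by a cardinal well-order r on a type 'k
(Field r = UNIV); elements of kappa^kappa are functions 'k => 'k.
Partial functions eta : X -> kappa with X a subset of kappa are maps 'k => 'k option.\<close>

definition Nbhd :: "('k \<Rightarrow> 'k option) \<Rightarrow> ('k \<Rightarrow> 'k) set" where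
  "Nbhd \<eta> = {\<zeta>. \<forall>x\<in>dom \<eta>. \<eta> x = Some (\<zeta> x)}"

definition basic_open :: "'k rel \<Rightarrow> ('k \<Rightarrow> 'k) set set" where
  "basic_open r = {Nbhd \<eta> | \<eta>. (card_of (dom \<eta>), r) \<in> ordLess} \<union> {{}}"

definition basic_open2 :: "'k rel \<Rightarrow> (('k \<Rightarrow> 'k) \<times> ('k \<Rightarrow> 'k)) set set" where
  "basic_open2 r = {A \<times> B | A B. A \<in> basic_open r \<and> B \<in> basic_open r}"

definition kopen :: "'k rel \<Rightarrow> 'a set set \<Rightarrow> 'a set \<Rightarrow> bool" where
  "kopen r B U \<longleftrightarrow> (\<exists>F. F \<subseteq> B \<and> (card_of F, r) \<in> ordLeq \<and> U = \<Union>F)"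

definition kclosed :: "'k rel \<Rightarrow> 'a set set \<Rightarrow> 'a set \<Rightarrow> bool" where
  "kclosed r B C \<longleftrightarrow> kopen r B (- C)"

inductive_set kborel :: "'k rel \<Rightarrow> 'a set set \<Rightarrow> 'a set set" for r B where
  basic: "U \<in> B \<Longrightarrow> U \<in> kborel r B"
| compl: "U \<in> kborel r B \<Longrightarrow> - U \<in> kborel r B"
| union: "(\<forall>U\<in>F. U \<in> kborel r B) \<Longrightarrow> (card_of F, r) \<in> ordLeq \<Longrightarrow> \<Union>F \<in> kborel r B"
| inter: "(\<forall>U\<in>F. U \<in> kborel r B) \<Longrightarrow> (card_of F, r) \<in> ordLeq \<Longrightarrow> \<Inter>F \<in> kborel r B"

definition tree :: "'n set \<Rightarrow> ('n \<Rightarrow> 'n \<Rightarrow> bool) \<Rightarrow> bool" where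
  "tree T lt \<longleftrightarrow>
     (\<forall>x\<in>T. \<not> lt x x) \<and>
     (\<forall>x\<in>T. \<forall>y\<in>T. \<forall>z\<in>T. lt x y \<and> lt y z \<longrightarrow> lt x z) \<and>
     (\<forall>t\<in>T. \<forall>x\<in>T. \<forall>y\<in>T. lt x t \<and> lt y t \<longrightarrow> lt x y \<or> x = y \<or> lt y x) \<and>
     (\<forall>t\<in>T. \<forall>S. S \<subseteq> {s\<in>T. lt s t} \<and> S \<noteq> {} \<longrightarrow> (\<exists>m\<in>S. \<forall>s\<in>S. \<not> lt s m))"

definition rooted :: "'n set \<Rightarrow> ('n \<Rightarrow> 'n \<Rightarrow> bool) \<Rightarrow> bool" where
  "rooted T lt \<longleftrightarrow> (\<exists>r0\<in>T. \<forall>t\<in>T. t = r0 \<or> lt r0 t)"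

definition chain_in :: "'n set \<Rightarrow> ('n \<Rightarrow> 'n \<Rightarrow> bool) \<Rightarrow> 'n set \<Rightarrow> bool" where
  "chain_in T lt C \<longleftrightarrow> C \<subseteq> T \<and> (\<forall>x\<in>C. \<forall>y\<in>C. lt x y \<or> x = y \<or> lt y x)"

text \<open>A branch (of the tree) is a downward closed chain; its length is the order type
of the induced (reflexive) order.\<close>
definition branch :: "'n set \<Rightarrow> ('n \<Rightarrow> 'n \<Rightarrow> bool) \<Rightarrow> 'n set \<Rightarrow> bool" where
  "branch T lt B \<longleftrightarrow> chain_in T lt B \<and> (\<forall>b\<in>B. \<forall>s\<in>T. lt s b \<longrightarrow> s \<in> B)"

definition induced_order :: "('n \<Rightarrow> 'n \<Rightarrow> bool) \<Rightarrow> 'n set \<Rightarrow> 'n rel" where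
  "induced_order lt B = {(x, y). x \<in> B \<and> y \<in> B \<and> (lt x y \<or> x = y)}"

definition imm_succ :: "'n set \<Rightarrow> ('n \<Rightarrow> 'n \<Rightarrow> bool) \<Rightarrow> 'n \<Rightarrow> 'n set" where
  "imm_succ T lt t = {s\<in>T. lt t s \<and> \<not> (\<exists>u\<in>T. lt t u \<and> lt u s)}"

definition leaf :: "'n set \<Rightarrow> ('n \<Rightarrow> 'n \<Rightarrow> bool) \<Rightarrow> 'n \<Rightarrow> bool" where
  "leaf T lt t \<longleftrightarrow> t \<in> T \<and> imm_succ T lt t = {}"

definition is_sup :: "'n set \<Rightarrow> ('n \<Rightarrow> 'n \<Rightarrow> bool) \<Rightarrow> 'n set \<Rightarrow> 'n \<Rightarrow> bool" where
  "is_sup T lt C s \<longleftrightarrow> s \<in> T \<and> (\<forall>c\<in>C. lt c s \<or> c = s) \<and>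
     (\<forall>u\<in>T. (\<forall>c\<in>C. lt c u \<or> c = u) \<longrightarrow> lt s u \<or> s = u)"

datatype 'a label = Cup | Cap | Leaf "'a set"

definition good_labelled_tree ::
  "'k rel \<Rightarrow> 'l rel \<Rightarrow> 'n set \<Rightarrow> ('n \<Rightarrow> 'n \<Rightarrow> bool) \<Rightarrow> ('n \<Rightarrow> ('k \<Rightarrow> 'k) label) \<Rightarrow> bool" where
  "good_labelled_tree r l T lt L \<longleftrightarrow>
     tree T lt \<and> rooted T lt \<and>
     \<not> (\<exists>B. branch T lt B \<and> (induced_order lt B, r) \<in> ordIso) \<and>
     (\<forall>t\<in>T. (card_of (imm_succ T lt t), r) \<in> ordLeq) \<and>
     (card_of T, l) \<in> ordLeq \<and>
     (\<forall>C. chain_in T lt C \<and> C \<noteq> {} \<longrightarrow> (\<exists>s. is_sup T lt C s)) \<and>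
     (\<forall>t\<in>T. \<not> leaf T lt t \<longrightarrow> L t = Cup \<or> L t = Cap) \<and>
     (\<forall>t\<in>T. leaf T lt t \<longrightarrow> (\<exists>U. L t = Leaf U \<and> U \<in> basic_open r))"

text \<open>Since the history of a play is determined by the current node of the tree
(it is the set of its predecessors), a strategy of player II is a function
assigning to every node labelled Cup one of its immediate successors.
A play ending at the leaf t is consistent with sigma iff at every Cup-node s
below t the move sigma s lies on the path to t.\<close>

definition strategy_II ::
  "'n set \<Rightarrow> ('n \<Rightarrow> 'n \<Rightarrow> bool) \<Rightarrow> ('n \<Rightarrow> 'a label) \<Rightarrow> ('n \<Rightarrow> 'n) \<Rightarrow> bool" where
  "strategy_II T lt L \<sigma> \<longleftrightarrow> (\<forall>s\<in>T. L s = Cup \<longrightarrow> \<sigma> s \<in> imm_succ T lt s)"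

definition consistent_II ::
  "'n set \<Rightarrow> ('n \<Rightarrow> 'n \<Rightarrow> bool) \<Rightarrow> ('n \<Rightarrow> 'a label) \<Rightarrow> ('n \<Rightarrow> 'n) \<Rightarrow> 'n \<Rightarrow> bool" where
  "consistent_II T lt L \<sigma> t \<longleftrightarrow>
     (\<forall>s\<in>T. lt s t \<and> L s = Cup \<longrightarrow> lt (\<sigma> s) t \<or> \<sigma> s = t)"

definition label_set :: "'a label \<Rightarrow> 'a set" where
  "label_set x = (case x of Leaf U \<Rightarrow> U | _ \<Rightarrow> {})"

definition winning_II ::
  "'n set \<Rightarrow> ('n \<Rightarrow> 'n \<Rightarrow> bool) \<Rightarrow> ('n \<Rightarrow> 'a label) \<Rightarrow> 'a \<Rightarrow> ('n \<Rightarrow> 'n) \<Rightarrow> bool" where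
  "winning_II T lt L \<xi> \<sigma> \<longleftrightarrow> strategy_II T lt L \<sigma> \<and>
     (\<forall>t. leaf T lt t \<and> consistent_II T lt L \<sigma> t \<longrightarrow> \<xi> \<in> label_set (L t))"

definition borel_star_code ::
  "'k rel \<Rightarrow> 'l rel \<Rightarrow> 'n set \<Rightarrow> ('n \<Rightarrow> 'n \<Rightarrow> bool) \<Rightarrow> ('n \<Rightarrow> ('k \<Rightarrow> 'k) label) \<Rightarrow> bool" where
  "borel_star_code r l T lt L \<longleftrightarrow>
     good_labelled_tree r l T lt L \<and>
     (\<exists>(D :: ('k \<Rightarrow> 'k) set) (\<pi> :: ('k \<Rightarrow> 'k) \<Rightarrow> ('n \<Rightarrow> 'n)).
        kclosed r (basic_open r) D \<and>
        (\<forall>\<eta>\<in>D. strategy_II T lt L (\<pi> \<eta>)) \<and>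
        (\<forall>\<xi>. (\<exists>\<sigma>. winning_II T lt L \<xi> \<sigma>) \<longrightarrow> (\<exists>\<eta>\<in>D. winning_II T lt L \<xi> (\<pi> \<eta>))) \<and>
        {(\<xi>, \<eta>). \<eta> \<in> D \<and> winning_II T lt L \<xi> (\<pi> \<eta>)} \<in> kborel r (basic_open2 r))"

end

theory Submission
  imports Defs
begin

(* A strategy of player II only matters through its moves at the Cup-nodes. Fix an injection
   code of T into kappa and, for every Cup-node s, a surjection f s of kappa onto the immediate
   successors of s. Then every eta in kappa^kappa decodes to the strategy s |-> f s (eta (code s)),
   and every strategy agrees at the Cup-nodes with a decoded one, so dom pi = kappa^kappa works.
   The decoded strategy wins for xi iff for every leaf t either xi lies in the label of t or some
   Cup-node s below t moves off the path to t; the latter depends on the single value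
   eta (code s). Since T has at most kappa nodes, the winning set is a kappa-intersection of
   kappa-unions of basic open cylinders. *)

unbundle cardinal_syntax

lemma finite_card_of_ordLess_Cinfinite:
  assumes "Cinfinite r" and "finite A"
  shows "|A| <o r"
  using assms by (intro Cfinite_ordLess_Cinfinite)
    (simp_all add: cfinite_def Field_card_of card_of_Card_order card_of_card_order_on)

lemma card_of_ordLeq_Field_UNIV:
  fixes r :: "'k rel" and A :: "'k set"
  assumes "Card_order r" and "Field r = UNIV"
  shows "|A| \<le>o r"
proof -
  have "|A| \<le>o |Field r|" using assms(2) by (simp add: card_of_mono1)
  also have "|Field r| =o r" using assms(1) by (rule card_of_Field_ordIso)
  finally show ?thesis .
qed

lemma kborel_Un:
  assumes "Cinfinite r" and "A \<in> kborel r B" and "C \<in> kborel r B"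
  shows "A \<union> C \<in> kborel r B"
proof -
  have "|{A, C}| \<le>o r"
    by (rule ordLess_imp_ordLeq[OF finite_card_of_ordLess_Cinfinite[OF assms(1)]]) simp
  then have "\<Union>{A, C} \<in> kborel r B" using assms(2,3) by (intro kborel.union) auto
  then show ?thesis by simp
qed

lemma kborel_UN:
  assumes "\<And>i. i \<in> I \<Longrightarrow> A i \<in> kborel r B" and "|I| \<le>o r"
  shows "(\<Union>i\<in>I. A i) \<in> kborel r B"
  using assms by (intro kborel.union) (auto intro: ordLeq_transitive[OF card_of_image])

lemma kborel_INT:
  assumes "\<And>i. i \<in> I \<Longrightarrow> A i \<in> kborel r B" and "|I| \<le>o r"
  shows "(\<Inter>i\<in>I. A i) \<in> kborel r B"
  using assms by (intro kborel.inter) (auto intro: ordLeq_transitive[OF card_of_image])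

lemma Nbhd_basic_open:
  assumes "|dom \<eta>| <o r"
  shows "Nbhd \<eta> \<in> basic_open r"
  unfolding basic_open_def by (intro UnI1 CollectI exI[of _ \<eta>] conjI refl assms)

lemma UNIV_basic_open:
  assumes "Cinfinite r"
  shows "UNIV \<in> basic_open r"
proof -
  have "UNIV = Nbhd (Map.empty :: 'k \<Rightarrow> 'k option)" by (simp add: Nbhd_def)
  also have "\<dots> \<in> basic_open r"
    using finite_card_of_ordLess_Cinfinite[OF assms, of "{}"] by (intro Nbhd_basic_open) simp
  finally show ?thesis .
qed

lemma point_cylinder_basic_open:
  assumes "Cinfinite r"
  shows "{\<zeta>. \<zeta> c = v} \<in> basic_open r"
proof -
  have "{\<zeta>. \<zeta> c = v} = Nbhd [c \<mapsto> v]" by (auto simp: Nbhd_def)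
  also have "\<dots> \<in> basic_open r"
    using finite_card_of_ordLess_Cinfinite[OF assms, of "{c}"] by (intro Nbhd_basic_open) simp
  finally show ?thesis .
qed

lemma Times_basic_open2:
  assumes "A \<in> basic_open r" and "B \<in> basic_open r"
  shows "A \<times> B \<in> basic_open2 r"
  unfolding basic_open2_def by (intro CollectI exI[of _ A] exI[of _ B] conjI refl assms)

lemma cylinder_kborel:
  fixes r :: "'k rel"
  assumes "Card_order r" and "Field r = UNIV" and "Cinfinite r"
  shows "UNIV \<times> {\<eta> :: 'k \<Rightarrow> 'k. P (\<eta> c)} \<in> kborel r (basic_open2 r)"
proof -
  have "UNIV \<times> {\<eta>. P (\<eta> c)} = (\<Union>v\<in>{v. P v}. UNIV \<times> {\<eta>. \<eta> c = v})" by auto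
  also have "\<dots> \<in> kborel r (basic_open2 r)"
  proof (rule kborel_UN)
    show "UNIV \<times> {\<eta>. \<eta> c = v} \<in> kborel r (basic_open2 r)" for v
      using UNIV_basic_open[OF assms(3)] point_cylinder_basic_open[OF assms(3)]
      by (intro kborel.basic Times_basic_open2)
  qed (rule card_of_ordLeq_Field_UNIV[OF assms(1,2)])
  finally show ?thesis .
qed

lemma kclosed_UNIV:
  assumes "Card_order r"
  shows "kclosed r B UNIV"
  unfolding kclosed_def kopen_def using assms by (intro exI[of _ "{}"]) (simp add: card_of_empty1)

lemma Card_order_ordIso_card_of_UNIV:
  fixes r :: "'k rel"
  assumes "Card_order r" and "Field r = UNIV"
  shows "r =o |UNIV :: 'k set|"
  using ordIso_symmetric[OF card_of_Field_ordIso[OF assms(1)]] assms(2) by simp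

lemma ex_inj_on_into_card_order:
  fixes r :: "'k rel" and T :: "'n set"
  assumes "Card_order r" and "Field r = UNIV" and "|T| \<le>o r"
  shows "\<exists>code :: 'n \<Rightarrow> 'k. inj_on code T"
proof -
  have "|T| \<le>o |UNIV :: 'k set|"
    using assms(3) Card_order_ordIso_card_of_UNIV[OF assms(1,2)] by (rule ordLeq_ordIso_trans)
  then show ?thesis using card_of_ordLeq[of T "UNIV :: 'k set"] by blast
qed

lemma good_labelled_treeD:
  assumes "good_labelled_tree r l T lt L"
  shows "|T| \<le>o l"
    and "\<And>t. t \<in> T \<Longrightarrow> |imm_succ T lt t| \<le>o r"
    and "\<And>t. leaf T lt t \<Longrightarrow> \<exists>U. L t = Leaf U \<and> U \<in> basic_open r"
  using assms unfolding good_labelled_tree_def leaf_def by (elim conjE; blast)+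

lemma good_labelled_tree_Cup_imm_succ:
  assumes "good_labelled_tree r l T lt L" and "s \<in> T" and "L s = Cup"
  shows "imm_succ T lt s \<noteq> {}" and "|imm_succ T lt s| \<le>o r"
proof -
  have "\<not> leaf T lt s" using good_labelled_treeD(3)[OF assms(1), of s] assms(3) by auto
  then show "imm_succ T lt s \<noteq> {}" using assms(2) unfolding leaf_def by blast
  show "|imm_succ T lt s| \<le>o r" using good_labelled_treeD(2)[OF assms(1,2)] .
qed

lemma ex_Cup_successor_enumeration:
  fixes r :: "'k rel"
  assumes "Card_order r" and "Field r = UNIV" and "good_labelled_tree r l T lt L"
  shows "\<exists>f :: 'n \<Rightarrow> 'k \<Rightarrow> 'n. \<forall>s\<in>T. L s = Cup \<longrightarrow> range (f s) = imm_succ T lt s"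
proof -
  have "\<exists>h :: 'k \<Rightarrow> 'n. range h = imm_succ T lt s" if "s \<in> T" "L s = Cup" for s
  proof -
    note succ = good_labelled_tree_Cup_imm_succ[OF assms(3) that]
    have "|imm_succ T lt s| \<le>o |UNIV :: 'k set|"
      using succ(2) Card_order_ordIso_card_of_UNIV[OF assms(1,2)] by (rule ordLeq_ordIso_trans)
    then show ?thesis using card_of_ordLeq2[OF succ(1)] by blast
  qed
  then show ?thesis by metis
qed

definition decode_strategy :: "('n \<Rightarrow> 'k) \<Rightarrow> ('n \<Rightarrow> 'k \<Rightarrow> 'n) \<Rightarrow> ('k \<Rightarrow> 'k) \<Rightarrow> 'n \<Rightarrow> 'n" where
  "decode_strategy code f \<eta> s = f s (\<eta> (code s))"

lemma strategy_II_decode_strategy: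
  assumes "\<forall>s\<in>T. L s = Cup \<longrightarrow> range (f s) = imm_succ T lt s"
  shows "strategy_II T lt L (decode_strategy code f \<eta>)"
  using assms unfolding strategy_II_def decode_strategy_def by blast

lemma decode_strategy_onto:
  assumes "inj_on code T" and "\<forall>s\<in>T. L s = Cup \<longrightarrow> range (f s) = imm_succ T lt s"
    and "strategy_II T lt L \<sigma>"
  shows "\<exists>\<eta>. \<forall>s\<in>T. L s = Cup \<longrightarrow> decode_strategy code f \<eta> s = \<sigma> s"
proof -
  define \<eta> where "\<eta> k = (SOME v. f (inv_into T code k) v = \<sigma> (inv_into T code k))" for k
  have "decode_strategy code f \<eta> s = \<sigma> s" if "s \<in> T" "L s = Cup" for s
  proof -
    have "\<sigma> s \<in> range (f s)" using assms(2,3) that unfolding strategy_II_def by blast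
    then have "\<exists>v. f s v = \<sigma> s" by auto
    then show ?thesis
      unfolding decode_strategy_def \<eta>_def inv_into_f_f[OF assms(1) \<open>s \<in> T\<close>] by (rule someI_ex)
  qed
  then show ?thesis by blast
qed

lemma winning_II_cong:
  assumes "\<forall>s\<in>T. L s = Cup \<longrightarrow> \<sigma> s = \<sigma>' s"
  shows "winning_II T lt L \<xi> \<sigma> \<longleftrightarrow> winning_II T lt L \<xi> \<sigma>'"
  using assms unfolding winning_II_def strategy_II_def consistent_II_def by auto

lemma ex_winning_decode_strategy:
  assumes "inj_on code T" and "\<forall>s\<in>T. L s = Cup \<longrightarrow> range (f s) = imm_succ T lt s"
    and winning: "winning_II T lt L \<xi> \<sigma>"
  shows "\<exists>\<eta>. winning_II T lt L \<xi> (decode_strategy code f \<eta>)"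
proof -
  have "strategy_II T lt L \<sigma>" using winning unfolding winning_II_def by (rule conjunct1)
  then obtain \<eta> where agree: "\<forall>s\<in>T. L s = Cup \<longrightarrow> decode_strategy code f \<eta> s = \<sigma> s"
    using decode_strategy_onto[OF assms(1,2)] by blast
  have "winning_II T lt L \<xi> (decode_strategy code f \<eta>)"
    using winning_II_cong[OF agree] winning by (rule iffD2)
  then show ?thesis by blast
qed

lemma winning_decode_strategy_kborel:
  fixes r :: "'k rel" and code :: "'n \<Rightarrow> 'k"
  assumes "Card_order r" and "Field r = UNIV" and "Cinfinite r" and "|T| \<le>o r"
    and strategy: "\<And>\<eta>. strategy_II T lt L (decode_strategy code f \<eta>)"
    and leaves: "\<And>t. leaf T lt t \<Longrightarrow> label_set (L t) \<in> basic_open r"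
  shows "{(\<xi>, \<eta>). winning_II T lt L \<xi> (decode_strategy code f \<eta>)} \<in> kborel r (basic_open2 r)"
proof -
  define off_path where
    "off_path t s = (UNIV :: ('k \<Rightarrow> 'k) set) \<times>
       {\<eta> :: 'k \<Rightarrow> 'k. \<not> (lt (f s (\<eta> (code s))) t \<or> f s (\<eta> (code s)) = t)}" for t s
  define below where "below t = {s\<in>T. lt s t \<and> L s = Cup}" for t
  define leaves_of_T where "leaves_of_T = {t. leaf T lt t}"
  have "{(\<xi>, \<eta>). winning_II T lt L \<xi> (decode_strategy code f \<eta>)} =
      (\<Inter>t\<in>leaves_of_T. (\<Union>s\<in>below t. off_path t s) \<union> label_set (L t) \<times> UNIV)"
    using strategy
    by (auto simp: winning_II_def consistent_II_def decode_strategy_def off_path_def below_def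
        leaves_of_T_def)
  also have "\<dots> \<in> kborel r (basic_open2 r)"
  proof (intro kborel_INT kborel_Un[OF assms(3)])
    show "(\<Union>s\<in>below t. off_path t s) \<in> kborel r (basic_open2 r)" for t
      unfolding off_path_def using cylinder_kborel[OF assms(1-3)] assms(4)
      by (intro kborel_UN) (auto simp: below_def intro: ordLeq_transitive[OF card_of_mono1])
    show "label_set (L t) \<times> UNIV \<in> kborel r (basic_open2 r)" if "t \<in> leaves_of_T" for t
      using leaves that UNIV_basic_open[OF assms(3)]
      by (intro kborel.basic Times_basic_open2) (simp_all add: leaves_of_T_def)
    show "|leaves_of_T| \<le>o r"
      using assms(4)
      by (auto simp: leaves_of_T_def leaf_def intro: ordLeq_transitive[OF card_of_mono1])
  qed
  finally show ?thesis .
qed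

theorem lemma3p4:
  fixes r :: "'k rel" and l :: "'l rel"
    and T :: "'n set" and lt :: "'n \<Rightarrow> 'n \<Rightarrow> bool" and L :: "'n \<Rightarrow> ('k \<Rightarrow> 'k) label"
  assumes "Card_order r" and "Field r = UNIV" and "Cinfinite r" and "regularCard r"
    and "Card_order l" and "(l, r) \<in> ordLeq"
    and "good_labelled_tree r l T lt L"
  shows "borel_star_code r l T lt L"
proof -
  have card_T: "|T| \<le>o r"
    using good_labelled_treeD(1)[OF assms(7)] assms(6) by (rule ordLeq_transitive)
  obtain code :: "'n \<Rightarrow> 'k" where code: "inj_on code T"
    using ex_inj_on_into_card_order[OF assms(1,2) card_T] by blast
  obtain f :: "'n \<Rightarrow> 'k \<Rightarrow> 'n" where f: "\<forall>s\<in>T. L s = Cup \<longrightarrow> range (f s) = imm_succ T lt s"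
    using ex_Cup_successor_enumeration[OF assms(1,2,7)] by blast
  note strategy = strategy_II_decode_strategy[OF f]
  have leaves: "label_set (L t) \<in> basic_open r" if "leaf T lt t" for t
    using good_labelled_treeD(3)[OF assms(7) that] by (auto simp: label_set_def)
  show ?thesis
    unfolding borel_star_code_def
  proof (intro conjI exI[of _ UNIV] exI[of _ "decode_strategy code f"] ballI allI impI)
    show "good_labelled_tree r l T lt L" by fact
    show "kclosed r (basic_open r) UNIV" using assms(1) by (rule kclosed_UNIV)
    show "strategy_II T lt L (decode_strategy code f \<eta>)" for \<eta> by (rule strategy)
    show "\<exists>\<eta>\<in>UNIV. winning_II T lt L \<xi> (decode_strategy code f \<eta>)"
      if "\<exists>\<sigma>. winning_II T lt L \<xi> \<sigma>" for \<xi>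
      using that ex_winning_decode_strategy[OF code f] by blast
    show "{(\<xi>, \<eta>). \<eta> \<in> UNIV \<and> winning_II T lt L \<xi> (decode_strategy code f \<eta>)}
        \<in> kborel r (basic_open2 r)"
      using winning_decode_strategy_kborel[OF assms(1-3) card_T strategy leaves] by simp
  qed
qed

end
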